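(* The relations $\equiv_{\tt CS}$ and $\equiv_{\tt o}$ are strong bisimulations for $(\mathcal T,\to_{\lambda j})$, where $\mathcal T$ is the set of $\lambda j$-terms.
   Context: $\lambda j$-terms are generated by $t,u::= x\mid \lambda x.t\mid t\,u\mid t[x/u]$ ($x$ ranging over variables); $\lambda x.t$ and $t[x/u]$ bind $x$ in $t$ (not in $u$), and terms are considered modulo $\alpha$-conversion. $\mathrm{fv}(t)$ is the set of free variables, $t\{x/u\}$ is capture-avoiding meta-level substitution, and $|t|_x$ is the number of free occurrences of $x$ in $t$. If $|t|_x=n\ge2$, $t_{[y]_x}$ denotes any term obtained from $t$ by replacing $k$ of the free occurrences of $x$ by a fresh variable $y$, for some $1\le k\le n-1$. ${\tt L}$ denotes a (possibly empty) list of jumps $[x_1/u_1]\dots[x_k/u_k]$. The rewriting rules, closed under all contexts, are: $({\tt dB})$ $(\lambda x.t){\tt L}\,u\to t[x/u]{\tt L}$ where no $x_i$ of ${\tt L}$ is free in $u$; $({\tt w})$ $t[x/u]\to t$ if $|t|_x=0$; $({\tt d})$ $t[x/u]\to t\{x/u\}$ if $|t|_x=1$; $({\tt c})$ $t[x/u]\to t_{[y]_x}[x/u][y/u]$ if $|t|_x\ge2$, $y$ fresh. $\to_{\lambda j}$ is the union of all four. $\equiv_{\tt CS}$ is the smallest equivalence closed under contexts containing $t[x/s][y/v]\sim t[y/v][x/s]$ whenever $x\notin\mathrm{fv}(v)$ and $y\notin\mathrm{fv}(s)$. $\equiv_{\tt o}$ (graphical equivalence) is the smallest equivalence closed under contexts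 containing that equation together with $\lambda y.(t[x/s])\sim(\lambda y.t)[x/s]$ if $y\notin\mathrm{fv}(s)$, and $t[x/s]\,v\sim(t\,v)[x/s]$ if $x\notin\mathrm{fv}(v)$. A strong bisimulation for a reduction system $(S,\to)$ is a relation ${\tt E}\subseteq S\times S$ such that whenever $s\,{\tt E}\,t$: if $s\to s'$ then there is $t'$ with $t\to t'$ and $s'\,{\tt E}\,t'$, and if $t\to t'$ then there is $s'$ with $s\to s'$ and $s'\,{\tt E}\,t'$. *)

theory Defs
  imports Main
begin

text \<open>lambda-j terms modulo alpha-conversion, represented with de Bruijn indices.
  Sub t u represents the jump t[x/u], where x is the index 0 bound in t (not in u).\<close>

datatype trm = Var nat | Lam trm | App trm trm | Sub trm trm

fun lift :: "nat \<Rightarrow> trm \<Rightarrow> trm" where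
  "lift k (Var i) = Var (if i < k then i else Suc i)"
| "lift k (Lam t) = Lam (lift (Suc k) t)"
| "lift k (App t u) = App (lift k t) (lift k u)"
| "lift k (Sub t u) = Sub (lift (Suc k) t) (lift k u)"

text \<open>Shift free indices > k down by one (used when k is not free).\<close>
fun down :: "nat \<Rightarrow> trm \<Rightarrow> trm" where
  "down k (Var i) = Var (if i < k then i else i - 1)"
| "down k (Lam t) = Lam (down (Suc k) t)"
| "down k (App t u) = App (down k t) (down k u)"
| "down k (Sub t u) = Sub (down (Suc k) t) (down k u)"

fun subst :: "nat \<Rightarrow> trm \<Rightarrow> trm \<Rightarrow> trm" where
  "subst k u (Var i) = (if i < k then Var i else if i = k then u else Var (i - 1))"
| "subst k u (Lam t) = Lam (subst (Suc k) (lift 0 u) t)"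
| "subst k u (App t s) = App (subst k u t) (subst k u s)"
| "subst k u (Sub t s) = Sub (subst (Suc k) (lift 0 u) t) (subst k u s)"

fun fv :: "trm \<Rightarrow> nat set" where
  "fv (Var i) = {i}"
| "fv (Lam t) = (\<lambda>i. i - 1) ` (fv t - {0})"
| "fv (App t u) = fv t \<union> fv u"
| "fv (Sub t u) = (\<lambda>i. i - 1) ` (fv t - {0}) \<union> fv u"

fun occ :: "nat \<Rightarrow> trm \<Rightarrow> nat" where
  "occ k (Var i) = (if i = k then 1 else 0)"
| "occ k (Lam t) = occ (Suc k) t"
| "occ k (App t u) = occ k t + occ k u"
| "occ k (Sub t u) = occ (Suc k) t + occ k u"

fun swap :: "nat \<Rightarrow> trm \<Rightarrow> trm" where
  "swap k (Var i) = Var (if i = k then Suc k else if i = Suc k then k else i)"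
| "swap k (Lam t) = Lam (swap (Suc k) t)"
| "swap k (App t u) = App (swap k t) (swap k u)"
| "swap k (Sub t u) = Sub (swap (Suc k) t) (swap k u)"

text \<open>t L: appending a list of jumps [x1/u1]...[xk/uk] (u1 innermost).\<close>
fun jumps :: "trm \<Rightarrow> trm list \<Rightarrow> trm" where
  "jumps t [] = t"
| "jumps t (u # L) = jumps (Sub t u) L"

text \<open>split k t t': t' is obtained from t by inserting a fresh variable y at index k+1
  (shifting the other free indices >= k+1) and replacing some (possibly none/all)
  occurrences of x = index k by y.\<close>
inductive split :: "nat \<Rightarrow> trm \<Rightarrow> trm \<Rightarrow> bool" where
  split_keep: "split k (Var k) (Var k)"
| split_ren: "split k (Var k) (Var (Suc k))"
| split_lt: "i < k \<Longrightarrow> split k (Var i) (Var i)"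
| split_gt: "k < i \<Longrightarrow> split k (Var i) (Var (Suc i))"
| split_lam: "split (Suc k) t t' \<Longrightarrow> split k (Lam t) (Lam t')"
| split_app: "split k t t' \<Longrightarrow> split k u u' \<Longrightarrow> split k (App t u) (App t' u')"
| split_sub: "split (Suc k) t t' \<Longrightarrow> split k u u' \<Longrightarrow> split k (Sub t u) (Sub t' u')"

inductive root :: "trm \<Rightarrow> trm \<Rightarrow> bool" where
  dB: "root (App (jumps (Lam t) L) u) (jumps (Sub t ((lift 0 ^^ length L) u)) L)"
| w: "occ 0 t = 0 \<Longrightarrow> root (Sub t u) (down 0 t)"
| d: "occ 0 t = 1 \<Longrightarrow> root (Sub t u) (subst 0 u t)"
| c: "occ 0 t \<ge> 2 \<Longrightarrow> split 0 t t' \<Longrightarrow> occ 0 t' \<ge> 1 \<Longrightarrow> occ 1 t' \<ge> 1 \<Longrightarrow>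
      root (Sub t u) (Sub (Sub t' (lift 0 u)) u)"

inductive step :: "trm \<Rightarrow> trm \<Rightarrow> bool" where
  step_root: "root t t' \<Longrightarrow> step t t'"
| step_lam: "step t t' \<Longrightarrow> step (Lam t) (Lam t')"
| step_appl: "step t t' \<Longrightarrow> step (App t u) (App t' u)"
| step_appr: "step u u' \<Longrightarrow> step (App t u) (App t u')"
| step_subl: "step t t' \<Longrightarrow> step (Sub t u) (Sub t' u)"
| step_subr: "step u u' \<Longrightarrow> step (Sub t u) (Sub t u')"

text \<open>Equation t[x/s][y/v] ~ t[y/v][x/s] (y not free in s; x not free in v holds by alpha).\<close>
inductive cs_ax :: "trm \<Rightarrow> trm \<Rightarrow> bool" where
  "0 \<notin> fv s \<Longrightarrow> cs_ax (Sub (Sub t s) v) (Sub (Sub (swap 0 t) (lift 0 v)) (down 0 s))"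

inductive o_ax :: "trm \<Rightarrow> trm \<Rightarrow> bool" where
  o_cs: "cs_ax t t' \<Longrightarrow> o_ax t t'"
| o_lam: "0 \<notin> fv s \<Longrightarrow> o_ax (Lam (Sub t s)) (Sub (Lam (swap 0 t)) (down 0 s))"
| o_app: "o_ax (App (Sub t s) v) (Sub (App t (lift 0 v)) s)"

inductive ctx_eq :: "(trm \<Rightarrow> trm \<Rightarrow> bool) \<Rightarrow> trm \<Rightarrow> trm \<Rightarrow> bool" for ax where
  eq_ax: "ax t t' \<Longrightarrow> ctx_eq ax t t'"
| eq_refl: "ctx_eq ax t t"
| eq_sym: "ctx_eq ax t t' \<Longrightarrow> ctx_eq ax t' t"
| eq_trans: "ctx_eq ax t t' \<Longrightarrow> ctx_eq ax t' t'' \<Longrightarrow> ctx_eq ax t t''"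
| eq_lam: "ctx_eq ax t t' \<Longrightarrow> ctx_eq ax (Lam t) (Lam t')"
| eq_app: "ctx_eq ax t t' \<Longrightarrow> ctx_eq ax u u' \<Longrightarrow> ctx_eq ax (App t u) (App t' u')"
| eq_sub: "ctx_eq ax t t' \<Longrightarrow> ctx_eq ax u u' \<Longrightarrow> ctx_eq ax (Sub t u) (Sub t' u')"

definition eq_CS :: "trm \<Rightarrow> trm \<Rightarrow> bool" where "eq_CS = ctx_eq cs_ax"
definition eq_o :: "trm \<Rightarrow> trm \<Rightarrow> bool" where "eq_o = ctx_eq o_ax"

definition strong_bisim :: "('a \<Rightarrow> 'a \<Rightarrow> bool) \<Rightarrow> ('a \<Rightarrow> 'a \<Rightarrow> bool) \<Rightarrow> bool" where
  "strong_bisim r E \<longleftrightarrow> (\<forall>s t. E s t \<longrightarrow>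
      (\<forall>s'. r s s' \<longrightarrow> (\<exists>t'. r t t' \<and> E s' t')) \<and>
      (\<forall>t'. r t t' \<longrightarrow> (\<exists>s'. r s s' \<and> E s' t')))"

end

theory Submission
  imports Defs
begin

(* The core is local commutation: any reduct of a term is matched, up to the equivalence, by
   a reduct of an eq_step-related term.  The delicate case is a dB redex whose function part
   (lambda t)L is rewritten; that shape is preserved (eq_step_jumps_Lam).  An abstract lemma
   turns such a symmetric simulating generator into a strong bisimulation of its
   reflexive-transitive closure, giving the theorem for both equivalences. *)

section \<open>Parallel renaming and substitution\<close>

definition up_ren :: "(nat \<Rightarrow> nat) \<Rightarrow> nat \<Rightarrow> nat" where
  "up_ren f i = (case i of 0 \<Rightarrow> 0 | Suc j \<Rightarrow> Suc (f j))"

fun ren :: "(nat \<Rightarrow> nat) \<Rightarrow> trm \<Rightarrow> trm" where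
  "ren f (Var i) = Var (f i)"
| "ren f (Lam t) = Lam (ren (up_ren f) t)"
| "ren f (App t u) = App (ren f t) (ren f u)"
| "ren f (Sub t u) = Sub (ren (up_ren f) t) (ren f u)"

definition up_sub :: "(nat \<Rightarrow> trm) \<Rightarrow> nat \<Rightarrow> trm" where
  "up_sub s i = (case i of 0 \<Rightarrow> Var 0 | Suc j \<Rightarrow> ren Suc (s j))"

fun ssub :: "(nat \<Rightarrow> trm) \<Rightarrow> trm \<Rightarrow> trm" where
  "ssub s (Var i) = s i"
| "ssub s (Lam t) = Lam (ssub (up_sub s) t)"
| "ssub s (App t u) = App (ssub s t) (ssub s u)"
| "ssub s (Sub t u) = Sub (ssub (up_sub s) t) (ssub s u)"

lemma up_ren_0[simp]: "up_ren f 0 = 0" and up_ren_Suc[simp]: "up_ren f (Suc i) = Suc (f i)"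
  by (simp_all add: up_ren_def)

lemma up_sub_0[simp]: "up_sub s 0 = Var 0" and up_sub_Suc[simp]: "up_sub s (Suc i) = ren Suc (s i)"
  by (simp_all add: up_sub_def)

lemma up_ren_comp: "up_ren f \<circ> up_ren g = up_ren (f \<circ> g)"
  by (rule ext) (simp add: up_ren_def split: nat.split)

lemma ren_comp: "ren f (ren g t) = ren (f \<circ> g) t"
  by (induction t arbitrary: f g) (auto simp: up_ren_comp)

lemma up_sub_Var_comp: "up_sub (Var \<circ> f) = Var \<circ> up_ren f"
  by (rule ext) (simp add: up_sub_def up_ren_def split: nat.split)

lemma ren_as_ssub: "ren f t = ssub (Var \<circ> f) t"
  by (induction t arbitrary: f) (auto simp: up_sub_Var_comp)

lemma up_sub_up_ren: "up_sub s \<circ> up_ren f = up_sub (s \<circ> f)"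
  by (rule ext) (simp add: up_sub_def up_ren_def split: nat.split)

lemma ssub_ren_comp: "ssub s (ren f t) = ssub (s \<circ> f) t"
  by (induction t arbitrary: s f) (simp_all add: up_sub_up_ren flip: comp_assoc)

lemma ren_up_sub: "ren (up_ren f) \<circ> up_sub s = up_sub (ren f \<circ> s)"
  by (rule ext) (simp add: up_sub_def ren_comp split: nat.split, simp add: comp_def)

lemma ren_ssub_comp: "ren f (ssub s t) = ssub (ren f \<circ> s) t"
  by (induction t arbitrary: s f) (simp_all add: ren_up_sub flip: comp_assoc)

lemma up_sub_comp: "ssub (up_sub s) \<circ> up_sub r = up_sub (ssub s \<circ> r)"
  by (rule ext) (simp add: up_sub_def ssub_ren_comp ren_ssub_comp split: nat.split, simp add: comp_def)

lemma ssub_comp: "ssub s (ssub r t) = ssub (ssub s \<circ> r) t"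
  by (induction t arbitrary: s r) (auto simp: up_sub_comp)

lemma ssub_Var: "ssub Var t = t"
proof -
  have "up_sub Var = Var" by (rule ext) (simp add: up_sub_def split: nat.split)
  then show ?thesis by (induction t) auto
qed

lemma ssub_id: "(\<And>i. s i = Var i) \<Longrightarrow> ssub s t = t"
proof -
  assume "\<And>i. s i = Var i"
  then have "s = Var" by auto
  then show ?thesis by (simp add: ssub_Var)
qed

lemma mem_image_pred: "i \<in> (\<lambda>i. i - 1) ` (A - {0}) \<longleftrightarrow> Suc i \<in> A"
proof
  assume "i \<in> (\<lambda>i. i - 1) ` (A - {0})"
  then obtain x where "x \<in> A" "x \<noteq> 0" "i = x - 1" by auto
  then show "Suc i \<in> A" by (cases x) auto
next
  assume "Suc i \<in> A" then show "i \<in> (\<lambda>i. i - 1) ` (A - {0})"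
    by (intro image_eqI[of _ _ "Suc i"]) auto
qed

lemma mem_fv_Lam[simp]: "i \<in> fv (Lam t) \<longleftrightarrow> Suc i \<in> fv t"
  by (simp only: fv.simps mem_image_pred)

lemma mem_fv_Sub[simp]: "i \<in> fv (Sub t u) \<longleftrightarrow> Suc i \<in> fv t \<or> i \<in> fv u"
  by (simp only: fv.simps mem_image_pred Un_iff)

declare fv.simps(2,4)[simp del]

lemma bex_fv_Lam[simp]: "(\<exists>i\<in>fv (Lam t). P i) \<longleftrightarrow> (\<exists>i. Suc i \<in> fv t \<and> P i)"
  by auto

lemma bex_fv_Sub[simp]:
  "(\<exists>i\<in>fv (Sub t u). P i) \<longleftrightarrow> (\<exists>i. Suc i \<in> fv t \<and> P i) \<or> (\<exists>i\<in>fv u. P i)"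
  by auto

lemma bex_up_ren: "(\<exists>i\<in>A. up_ren f i = Suc j) \<longleftrightarrow> (\<exists>i. Suc i \<in> A \<and> f i = j)"
proof
  assume "\<exists>i\<in>A. up_ren f i = Suc j"
  then obtain i where "i \<in> A" "up_ren f i = Suc j" by blast
  then show "\<exists>i. Suc i \<in> A \<and> f i = j" by (cases i) auto
qed force

lemma bex_up_sub:
  "(\<exists>i\<in>A. Suc j \<in> fv (up_sub s i)) \<longleftrightarrow> (\<exists>i. Suc i \<in> A \<and> Suc j \<in> fv (ren Suc (s i)))"
proof
  assume "\<exists>i\<in>A. Suc j \<in> fv (up_sub s i)"
  then obtain i where "i \<in> A" "Suc j \<in> fv (up_sub s i)" by blast
  then show "\<exists>i. Suc i \<in> A \<and> Suc j \<in> fv (ren Suc (s i))" by (cases i) auto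
qed force

lemma fv_ren: "j \<in> fv (ren f t) \<longleftrightarrow> (\<exists>i\<in>fv t. f i = j)"
proof (induction t arbitrary: f j)
  case (Lam t) then show ?case by (simp add: bex_up_ren)
next
  case (Sub t u) then show ?case by (simp add: bex_up_ren)
qed auto

lemma fv_ssub: "j \<in> fv (ssub s t) \<longleftrightarrow> (\<exists>i\<in>fv t. j \<in> fv (s i))"
proof (induction t arbitrary: s j)
  case (Lam t) then show ?case by (simp add: bex_up_sub fv_ren)
next
  case (Sub t u) then show ?case by (simp add: bex_up_sub fv_ren)
qed auto

lemma ssub_cong: "(\<And>i. i \<in> fv t \<Longrightarrow> f i = g i) \<Longrightarrow> ssub f t = ssub g t"
proof (induction t arbitrary: f g)
  case (App t u)
  have "ssub f t = ssub g t" by (rule App.IH(1)) (use App.prems in auto)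
  moreover have "ssub f u = ssub g u" by (rule App.IH(2)) (use App.prems in auto)
  ultimately show ?case by simp
next
  case (Lam t)
  have "ssub (up_sub f) t = ssub (up_sub g) t"
  proof (rule Lam.IH)
    fix i assume "i \<in> fv t" then show "up_sub f i = up_sub g i" using Lam.prems by (cases i) auto
  qed
  then show ?case by simp
next
  case (Sub t u)
  have "ssub (up_sub f) t = ssub (up_sub g) t"
  proof (rule Sub.IH(1))
    fix i assume "i \<in> fv t" then show "up_sub f i = up_sub g i" using Sub.prems by (cases i) auto
  qed
  moreover have "ssub f u = ssub g u" by (rule Sub.IH(2)) (use Sub.prems in auto)
  ultimately show ?case by simp
qed auto

lemma ren_cong: "(\<And>i. i \<in> fv t \<Longrightarrow> f i = g i) \<Longrightarrow> ren f t = ren g t"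
  unfolding ren_as_ssub by (rule ssub_cong) simp

lemma ren_id: "(\<And>i. i \<in> fv t \<Longrightarrow> f i = i) \<Longrightarrow> ren f t = t"
  using ren_cong[of t f "\<lambda>i. i"] ssub_Var[of t] by (simp add: ren_as_ssub comp_def)

definition liftf :: "nat \<Rightarrow> nat \<Rightarrow> nat" where
  "liftf k i = (if i < k then i else Suc i)"

definition swapf :: "nat \<Rightarrow> nat \<Rightarrow> nat" where
  "swapf k i = (if i = k then Suc k else if i = Suc k then k else i)"

definition downf :: "nat \<Rightarrow> nat \<Rightarrow> nat" where
  "downf k i = (if i < k then i else i - 1)"

text \<open>colf k merges the indices k and k+1; it undoes the variable splitting of split k.\<close>

definition colf :: "nat \<Rightarrow> nat \<Rightarrow> nat" where
  "colf k i = (if i \<le> k then i else i - 1)"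

definition substs :: "nat \<Rightarrow> trm \<Rightarrow> nat \<Rightarrow> trm" where
  "substs k u i = (if i < k then Var i else if i = k then u else Var (i - 1))"

lemma up_ren_liftf: "up_ren (liftf k) = liftf (Suc k)"
  by (rule ext) (simp add: up_ren_def liftf_def split: nat.split)

lemma lift_ren: "lift k t = ren (liftf k) t"
  by (induction t arbitrary: k) (simp_all add: up_ren_liftf, simp_all add: liftf_def)

lemma lift0: "lift 0 t = ren Suc t"
proof -
  have "liftf 0 = Suc" by (rule ext) (simp add: liftf_def)
  then show ?thesis by (simp only: lift_ren)
qed

lemma up_ren_swapf: "up_ren (swapf k) = swapf (Suc k)"
  by (rule ext) (simp add: up_ren_def swapf_def split: nat.split)

lemma swap_ren: "swap k t = ren (swapf k) t"
  by (induction t arbitrary: k) (simp_all add: up_ren_swapf, simp_all add: swapf_def)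

lemma down_ren: "k \<notin> fv t \<Longrightarrow> down k t = ren (downf k) t"
proof (induction t arbitrary: k)
  case (Lam t)
  have "ren (downf (Suc k)) t = ren (up_ren (downf k)) t"
  proof (rule ren_cong)
    fix i assume "i \<in> fv t"
    with Lam.prems have "i \<noteq> Suc k" by auto
    then show "downf (Suc k) i = up_ren (downf k) i" by (cases i) (auto simp: downf_def)
  qed
  with Lam show ?case by simp
next
  case (Sub t u)
  have "ren (downf (Suc k)) t = ren (up_ren (downf k)) t"
  proof (rule ren_cong)
    fix i assume "i \<in> fv t"
    with Sub.prems have "i \<noteq> Suc k" by auto
    then show "downf (Suc k) i = up_ren (downf k) i" by (cases i) (auto simp: downf_def)
  qed
  with Sub show ?case by simp
qed (auto simp: downf_def)

lemma up_sub_substs: "up_sub (substs k u) = substs (Suc k) (lift 0 u)"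
  by (rule ext) (simp add: up_sub_def substs_def lift0 split: nat.split)

lemma subst_ssub: "subst k u t = ssub (substs k u) t"
  by (induction t arbitrary: k u) (simp_all add: up_sub_substs, simp_all add: substs_def)

text \<open>Rewriting with these facts turns an identity between index operations into an identity
  between two substitutions, which is then checked pointwise on the free variables.\<close>

lemmas to_ssub = lift_ren swap_ren subst_ssub ren_as_ssub ssub_comp
lemmas index_defs = liftf_def swapf_def downf_def colf_def substs_def up_sub_def

lemma swap_swap: "swap k (swap k x) = x"
  by (simp add: swap_ren ren_comp) (rule ren_id, simp add: swapf_def)

lemma swap_lift1: "swap 0 (lift (Suc 0) t) = lift 0 t"
  by (simp add: to_ssub) (auto intro!: ssub_cong simp: index_defs to_ssub split: nat.split)

lemma swap_lift0: "swap 0 (lift 0 t) = lift (Suc 0) t"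
  by (metis swap_lift1 swap_swap)

lemma swap_lift_lift: "swap 0 (lift 0 (lift 0 v)) = lift 0 (lift 0 v)"
  by (simp add: to_ssub) (auto intro!: ssub_cong simp: index_defs to_ssub split: nat.split)

lemma subst_Suc_swap: "subst (Suc k) u (swap k t) = subst k u t"
  by (simp add: to_ssub) (auto intro!: ssub_cong simp: index_defs to_ssub split: nat.split)

lemma subst_swap: "subst k u (swap k t) = subst (Suc k) u t"
  by (metis subst_Suc_swap swap_swap)

lemma subst_lift: "subst 0 s (lift 0 v) = v"
  by (simp add: to_ssub) (auto intro!: ssub_id simp: index_defs to_ssub split: nat.split)

lemma colf_swap_swap:
  "ren (up_ren (colf 0)) (swap 0 (swap (Suc 0) t)) = swap 0 (ren (colf 0) t)"
  by (simp add: to_ssub) (auto intro!: ssub_cong simp: index_defs to_ssub up_ren_def split: nat.split)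

lemma colf_swap_swap':
  "ren (colf 0) (swap (Suc 0) (swap 0 t)) = swap 0 (ren (up_ren (colf 0)) t)"
  by (simp add: to_ssub) (auto intro!: ssub_cong simp: index_defs to_ssub up_ren_def split: nat.split)

lemma colf_lift_lift: "ren (colf 0) (lift 0 (lift 0 v)) = lift 0 v"
  by (simp add: to_ssub) (auto intro!: ssub_cong simp: index_defs to_ssub split: nat.split)

lemma ren_lift0: "ren (up_ren f) (lift 0 x) = lift 0 (ren f x)"
  by (simp add: to_ssub) (auto intro!: ssub_cong simp: index_defs to_ssub up_ren_def split: nat.split)

lemma ren_swap0: "ren (up_ren (up_ren f)) (swap 0 x) = swap 0 (ren (up_ren (up_ren f)) x)"
  by (simp add: to_ssub) (auto intro!: ssub_cong simp: index_defs to_ssub up_ren_def split: nat.split)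

lemma ssub_lift0: "ssub (up_sub s) (lift 0 t) = lift 0 (ssub s t)"
  by (simp add: to_ssub) (auto intro!: ssub_cong simp: index_defs to_ssub split: nat.split)

lemma ssub_liftn: "ssub ((up_sub ^^ n) s) ((lift 0 ^^ n) t) = (lift 0 ^^ n) (ssub s t)"
  by (induction n) (auto simp: ssub_lift0)

lemma ssub_swap0: "ssub (up_sub (up_sub s)) (swap 0 x) = swap 0 (ssub (up_sub (up_sub s)) x)"
  by (simp add: to_ssub) (auto intro!: ssub_cong simp: index_defs to_ssub split: nat.split)

lemma ssub_colf: "ssub (up_sub s) (ren (colf 0) t) = ren (colf 0) (ssub (up_sub (up_sub s)) t)"
  by (simp add: to_ssub) (auto intro!: ssub_cong simp: index_defs to_ssub split: nat.split)

lemma ssub_subst0: "ssub s (subst 0 u t) = subst 0 (ssub s u) (ssub (up_sub s) t)"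
  by (simp add: to_ssub) (auto intro!: ssub_cong ssub_id[symmetric] simp: index_defs to_ssub split: nat.split)

lemma notin_fv_lift: "k \<notin> fv (lift k t)"
  by (auto simp: lift_ren fv_ren liftf_def)

lemma lift_down: "k \<notin> fv t \<Longrightarrow> lift k (down k t) = t"
proof -
  assume a: "k \<notin> fv t"
  have "ren (liftf k \<circ> downf k) t = t"
  proof (rule ren_id)
    fix i assume "i \<in> fv t" with a have "i \<noteq> k" by auto
    then show "(liftf k \<circ> downf k) i = i" by (auto simp: liftf_def downf_def)
  qed
  with a show ?thesis by (simp add: down_ren lift_ren ren_comp)
qed

lemma down_lift: "down k (lift k t) = t"
proof -
  have "k \<notin> fv (lift k t)" by (rule notin_fv_lift)
  then show ?thesis
    by (simp add: down_ren lift_ren ren_comp) (rule ren_id, auto simp: liftf_def downf_def)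
qed

lemma lift_inj: "lift k a = lift k b \<Longrightarrow> a = b"
  by (metis down_lift)

lemma fresh_is_lift: "k \<notin> fv t \<Longrightarrow> \<exists>t0. t = lift k t0"
  using lift_down by metis

lemma ren_lift_inv: "ren (up_ren f) x = lift 0 s \<Longrightarrow> \<exists>s1. x = lift 0 s1 \<and> s = ren f s1"
proof -
  assume a: "ren (up_ren f) x = lift 0 s"
  have "0 \<notin> fv x"
  proof
    assume "0 \<in> fv x" then have "0 \<in> fv (ren (up_ren f) x)"
      by (simp add: fv_ren) (rule bexI[of _ 0], auto)
    then show False using a notin_fv_lift by metis
  qed
  then obtain s1 where x: "x = lift 0 s1" using fresh_is_lift by blast
  with a have "lift 0 (ren f s1) = lift 0 s" by (simp add: ren_lift0)
  then have "s = ren f s1" by (metis lift_inj)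
  with x show ?thesis by blast
qed

lemma colf_lift_inv: "ren (colf 0) S = lift 0 s \<Longrightarrow> S = lift 0 (lift 0 s)"
proof -
  assume a: "ren (colf 0) S = lift 0 s"
  have not_both: "i \<notin> fv S" if "colf 0 i = 0" for i
  proof
    assume "i \<in> fv S" then have "0 \<in> fv (ren (colf 0) S)" using that by (auto simp: fv_ren)
    then show False using a notin_fv_lift by metis
  qed
  then obtain S1 where S1: "S = lift 0 S1" using fresh_is_lift by (metis colf_def le0)
  have "Suc 0 \<notin> fv S" by (rule not_both) (simp add: colf_def)
  then have "0 \<notin> fv S1" by (auto simp: S1 lift0 fv_ren)
  then obtain s2 where S2: "S1 = lift 0 s2" using fresh_is_lift by blast
  from a have "lift 0 s2 = lift 0 s" by (simp add: S1 S2 colf_lift_lift)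
  then show ?thesis using S1 S2 lift_inj by metis
qed

lemma lift0_Sub: "lift 0 X = Sub a b \<Longrightarrow> \<exists>a' b'. X = Sub a' b' \<and> a = lift (Suc 0) a' \<and> b = lift 0 b'"
  by (cases X) auto

lemma lift0_Lam: "lift 0 X = Lam a \<Longrightarrow> \<exists>a'. X = Lam a' \<and> a = lift (Suc 0) a'"
  by (cases X) auto

lemma lift0_App: "lift 0 X = App a b \<Longrightarrow> \<exists>a' b'. X = App a' b' \<and> a = lift 0 a' \<and> b = lift 0 b'"
  by (cases X) auto

lemma ren_Lam: "ren f t = Lam a \<Longrightarrow> \<exists>a'. t = Lam a' \<and> a = ren (up_ren f) a'"
  by (cases t) auto

lemma ren_App: "ren f t = App a b \<Longrightarrow> \<exists>a' b'. t = App a' b' \<and> a = ren f a' \<and> b = ren f b'"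
  by (cases t) auto

lemma ren_Sub: "ren f t = Sub a b \<Longrightarrow> \<exists>a' b'. t = Sub a' b' \<and> a = ren (up_ren f) a' \<and> b = ren f b'"
  by (cases t) auto

lemma occ_fv: "occ k t = 0 \<longleftrightarrow> k \<notin> fv t"
  by (induction t arbitrary: k) auto

lemma occ_ren: "(\<And>i. i \<in> fv t \<Longrightarrow> f i = j \<longleftrightarrow> i = j') \<Longrightarrow> occ j (ren f t) = occ j' t"
proof (induction t arbitrary: f j j')
  case (App t u)
  have "occ j (ren f t) = occ j' t" by (rule App.IH(1)) (use App.prems in auto)
  moreover have "occ j (ren f u) = occ j' u" by (rule App.IH(2)) (use App.prems in auto)
  ultimately show ?case by simp
next
  case (Lam t)
  have "occ (Suc j) (ren (up_ren f) t) = occ (Suc j') t"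
  proof (rule Lam.IH)
    fix i assume "i \<in> fv t"
    then show "up_ren f i = Suc j \<longleftrightarrow> i = Suc j'" using Lam.prems by (cases i) auto
  qed
  then show ?case by simp
next
  case (Sub t u)
  have "occ (Suc j) (ren (up_ren f) t) = occ (Suc j') t"
  proof (rule Sub.IH(1))
    fix i assume "i \<in> fv t"
    then show "up_ren f i = Suc j \<longleftrightarrow> i = Suc j'" using Sub.prems by (cases i) auto
  qed
  moreover have "occ j (ren f u) = occ j' u" by (rule Sub.IH(2)) (use Sub.prems in auto)
  ultimately show ?case by simp
qed auto

lemma occ_ssub:
  "s k = Var k \<Longrightarrow> (\<And>i. i \<in> fv t \<Longrightarrow> i \<noteq> k \<Longrightarrow> k \<notin> fv (s i)) \<Longrightarrow> occ k (ssub s t) = occ k t"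
proof (induction t arbitrary: s k)
  case (Var x) then show ?case by (cases "x = k") (auto simp: occ_fv)
next
  case (App t u)
  have "occ k (ssub s t) = occ k t" by (rule App.IH(1)) (use App.prems in auto)
  moreover have "occ k (ssub s u) = occ k u" by (rule App.IH(2)) (use App.prems in auto)
  ultimately show ?case by simp
next
  case (Lam t)
  have "occ (Suc k) (ssub (up_sub s) t) = occ (Suc k) t"
  proof (rule Lam.IH)
    show "up_sub s (Suc k) = Var (Suc k)" using Lam.prems by simp
    fix i assume "i \<in> fv t" "i \<noteq> Suc k" then show "Suc k \<notin> fv (up_sub s i)" using Lam.prems
      by (cases i) (auto simp: fv_ren)
  qed
  then show ?case by simp
next
  case (Sub t u)
  have "occ (Suc k) (ssub (up_sub s) t) = occ (Suc k) t"
  proof (rule Sub.IH(1))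
    show "up_sub s (Suc k) = Var (Suc k)" using Sub.prems by simp
    fix i assume "i \<in> fv t" "i \<noteq> Suc k" then show "Suc k \<notin> fv (up_sub s i)" using Sub.prems
      by (cases i) (auto simp: fv_ren)
  qed
  moreover have "occ k (ssub s u) = occ k u" by (rule Sub.IH(2)) (use Sub.prems in auto)
  ultimately show ?case by simp
qed

lemma occ_ssub_up_sub: "occ 0 (ssub (up_sub s) t) = occ 0 t"
  by (rule occ_ssub) (auto simp: fv_ren up_sub_def split: nat.splits)

lemma occ_ssub_up_sub2: "occ k (ssub (up_sub (up_sub s)) t) = occ k t" if "k \<le> Suc 0"
  using that by (intro occ_ssub) (auto simp: fv_ren up_sub_def split: nat.splits)

lemma up_ren_colf: "up_ren (colf k) = colf (Suc k)"
  by (rule ext) (simp add: up_ren_def colf_def split: nat.split)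

lemma occ_colf: "occ k (ren (colf k) t) = occ k t + occ (Suc k) t"
  by (induction t arbitrary: k) (auto simp: up_ren_colf colf_def)

lemma occ_lift0: "occ (Suc k) (lift 0 x) = occ k x"
  by (simp add: lift0) (rule occ_ren, auto)

lemma occ_lift0_0: "occ 0 (lift 0 x) = 0"
  by (simp add: occ_fv notin_fv_lift)

lemma occ_swap0_0: "occ 0 (swap 0 x) = occ (Suc 0) x"
  by (simp add: swap_ren) (rule occ_ren, auto simp: swapf_def)

lemma occ_swap0_1: "occ (Suc 0) (swap 0 x) = occ 0 x"
  by (simp add: swap_ren) (rule occ_ren, auto simp: swapf_def)

lemma occ_swap0_2: "occ (Suc (Suc k)) (swap 0 x) = occ (Suc (Suc k)) x"
  by (simp add: swap_ren) (rule occ_ren, auto simp: swapf_def)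

lemma occ_swap1_0: "occ 0 (swap (Suc 0) x) = occ 0 x"
  by (simp add: swap_ren) (rule occ_ren, auto simp: swapf_def)

lemma occ_swap1_1: "occ (Suc 0) (swap (Suc 0) x) = occ (Suc (Suc 0)) x"
  by (simp add: swap_ren) (rule occ_ren, auto simp: swapf_def)

lemma occ_swap1_2: "occ (Suc (Suc 0)) (swap (Suc 0) x) = occ (Suc 0) x"
  by (simp add: swap_ren) (rule occ_ren, auto simp: swapf_def)

lemmas occ_simps = occ_lift0 occ_lift0_0 occ_swap0_0 occ_swap0_1 occ_swap0_2
  occ_swap1_0 occ_swap1_1 occ_swap1_2

lemma split_colf: "split k t t' \<longleftrightarrow> t = ren (colf k) t'"
proof
  assume "split k t t'" then show "t = ren (colf k) t'"
    by (induction rule: split.induct) (simp_all add: up_ren_colf, simp_all add: colf_def)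
next
  assume "t = ren (colf k) t'" then show "split k t t'"
  proof (induction t' arbitrary: k t)
    case (Var x)
    show ?case
    proof (cases "x \<le> Suc k")
      case True then consider "x < k" | "x = k" | "x = Suc k" by linarith
      then show ?thesis using Var by cases (auto simp: colf_def intro: split.intros)
    next
      case False
      then obtain y where "x = Suc y" "k < y" by (cases x) auto
      then show ?thesis using Var by (auto simp: colf_def intro: split.intros)
    qed
  next
    case (Lam t') then show ?case by (auto simp: up_ren_colf intro: split.intros)
  next
    case (App t1 t2) then show ?case by (auto intro: split.intros)
  next
    case (Sub t1 t2) then show ?case by (auto simp: up_ren_colf intro: split.intros)
  qed
qed

lemma jumps_snoc: "jumps t (L @ [v]) = Sub (jumps t L) v"
  by (induction L arbitrary: t) auto

lemma jumps_Lam_Sub: "jumps (Lam t) L = Sub A B \<Longrightarrow> \<exists>L'. L = L' @ [B] \<and> A = jumps (Lam t) L'"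
  by (cases L rule: rev_cases) (auto simp: jumps_snoc)

lemma jumps_Lam_Lam: "jumps (Lam t) L = Lam A \<Longrightarrow> L = [] \<and> A = t"
  by (cases L rule: rev_cases) (auto simp: jumps_snoc)

lemma jumps_Lam_App: "jumps (Lam t) L \<noteq> App A B"
  by (cases L rule: rev_cases) (auto simp: jumps_snoc)

text \<open>Substituting into a list of jumps: the k-th jump from the outside lies under k binders.\<close>

fun ssub_list :: "(nat \<Rightarrow> trm) \<Rightarrow> trm list \<Rightarrow> trm list" where
  "ssub_list s [] = []"
| "ssub_list s (u # L) = ssub ((up_sub ^^ length L) s) u # ssub_list s L"

lemma length_ssub_list[simp]: "length (ssub_list s L) = length L"
  by (induction L) auto

lemma ssub_jumps: "ssub s (jumps t L) = jumps (ssub ((up_sub ^^ length L) s) t) (ssub_list s L)"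
  by (induction L arbitrary: t) auto

fun fv_list :: "trm list \<Rightarrow> nat set" where
  "fv_list [] = {}"
| "fv_list (v # L) = {j. j + length L \<in> fv v} \<union> fv_list L"

lemma fv_jumps: "j \<in> fv (jumps t L) \<longleftrightarrow> j + length L \<in> fv t \<or> j \<in> fv_list L"
  by (induction L arbitrary: t j) auto

lemma fv_liftn: "j + n \<in> fv ((lift 0 ^^ n) u) \<longleftrightarrow> j \<in> fv u"
  by (induction n arbitrary: j) (auto simp: lift0 fv_ren)

lemma root_weak: "root (Sub (lift 0 t0) u) t0"
  using root.w[of "lift 0 t0" u] by (simp add: occ_fv notin_fv_lift down_lift)

lemma step_weak: "step (Sub (lift 0 a) u) a"
  by (intro step_root root_weak)

lemma root_contr:
  "1 \<le> occ 0 t' \<Longrightarrow> 1 \<le> occ (Suc 0) t' \<Longrightarrow> root (Sub (ren (colf 0) t') u) (Sub (Sub t' (lift 0 u)) u)"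
  by (rule root.c) (auto simp: occ_colf split_colf)

lemma root_Sub_cases[consumes 1, case_names weak deref contr]:
  assumes "root (Sub t u) X"
  obtains (weak) t0 where "t = lift 0 t0" "X = t0"
  | (deref) "occ 0 t = 1" "X = subst 0 u t"
  | (contr) t' where "t = ren (colf 0) t'" "1 \<le> occ 0 t'" "1 \<le> occ (Suc 0) t'"
      "X = Sub (Sub t' (lift 0 u)) u"
  using assms
proof (cases rule: root.cases)
  case w
  then show thesis using that(1)[of "down 0 t"] by (simp add: lift_down occ_fv)
next
  case (c t')
  then show thesis using that(3)[of t'] by (auto simp: split_colf)
qed (use that in auto)

lemma root_App_dB:
  "root (App F u) X \<Longrightarrow> \<exists>t L. F = jumps (Lam t) L \<and> X = jumps (Sub t ((lift 0 ^^ length L) u)) L"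
  by (induction "App F u" X rule: root.induct) auto

lemma step_Lam_cases[consumes 1]:
  assumes "step (Lam t) X" obtains t' where "X = Lam t'" "step t t'"
  using assms by (cases rule: step.cases) (auto elim: root.cases)

lemma step_App_cases[consumes 1, case_names root left right]:
  assumes "step (App t u) X"
  obtains (root) "root (App t u) X"
  | (left) t' where "X = App t' u" "step t t'"
  | (right) u' where "X = App t u'" "step u u'"
  using assms by (cases rule: step.cases) auto

lemma step_Sub_cases[consumes 1, case_names root left right]:
  assumes "step (Sub t u) X"
  obtains (root) "root (Sub t u) X"
  | (left) t' where "X = Sub t' u" "step t t'"
  | (right) u' where "X = Sub t u'" "step u u'"
  using assms by (cases rule: step.cases) auto

lemma root_ssub: "root t t' \<Longrightarrow> root (ssub s t) (ssub s t')"
proof (induction rule: root.induct)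
  case (dB t L u)
  show ?case
    using root.dB[of "ssub (up_sub ((up_sub ^^ length L) s)) t" "ssub_list s L" "ssub s u"]
    by (simp add: ssub_jumps ssub_liftn)
next
  case (w t u)
  then obtain t0 where t0: "t = lift 0 t0" using fresh_is_lift occ_fv by metis
  show ?case using root_weak[of "ssub s t0" "ssub s u"] by (simp add: t0 down_lift ssub_lift0)
next
  case (d t u)
  then have "root (Sub (ssub (up_sub s) t) (ssub s u)) (subst 0 (ssub s u) (ssub (up_sub s) t))"
    by (intro root.d) (simp add: occ_ssub_up_sub)
  then show ?case by (simp add: ssub_subst0)
next
  case (c t t' u)
  then have t: "t = ren (colf 0) t'" by (simp add: split_colf)
  show ?case using root_contr[of "ssub (up_sub (up_sub s)) t'" "ssub s u"] c
    by (simp add: t ssub_colf ssub_lift0 occ_ssub_up_sub2)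
qed

lemma step_ssub: "step t t' \<Longrightarrow> step (ssub s t) (ssub s t')"
  by (induction arbitrary: s rule: step.induct) (auto intro: step.intros root_ssub)

lemma step_lift: "step t t' \<Longrightarrow> step (lift k t) (lift k t')"
  by (simp add: lift_ren ren_as_ssub step_ssub)

lemma step_swap: "step t t' \<Longrightarrow> step (swap k t) (swap k t')"
  by (simp add: swap_ren ren_as_ssub step_ssub)

lemma root_fv: "root t t' \<Longrightarrow> j \<in> fv t' \<Longrightarrow> j \<in> fv t"
proof (induction rule: root.induct)
  case (dB t L u) then show ?case by (auto simp: fv_jumps fv_liftn)
next
  case (w t u)
  then obtain t0 where t0: "t = lift 0 t0" using fresh_is_lift occ_fv by metis
  then show ?case using w by (simp add: t0 down_lift) (auto simp: lift0 fv_ren)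
next
  case (d t u) then show ?case by (auto simp: subst_ssub fv_ssub substs_def split: if_splits)
next
  case (c t t' u)
  then have t: "t = ren (colf 0) t'" by (simp add: split_colf)
  from c.prems consider "Suc (Suc j) \<in> fv t'" | "j \<in> fv u" by (auto simp: lift0 fv_ren)
  then show ?case
  proof cases
    case 1 then have "Suc j \<in> fv t" unfolding t fv_ren
      by (intro bexI[of _ "Suc (Suc j)"]) (auto simp: colf_def)
    then show ?thesis by simp
  qed simp
qed

lemma step_fv: "step t t' \<Longrightarrow> j \<in> fv t' \<Longrightarrow> j \<in> fv t"
  by (induction arbitrary: j rule: step.induct) (auto dest: root_fv)

text \<open>Every reduct of a lifted term is the lift of a reduct: apply the substitution
  that lowers all indices, which inverts lift 0.\<close>

lemma step_lift_inv: "step (lift 0 a) b \<Longrightarrow> \<exists>b0. b = lift 0 b0 \<and> step a b0"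
proof -
  assume st: "step (lift 0 a) b"
  have "0 \<notin> fv b" using step_fv[OF st] notin_fv_lift by blast
  then obtain b0 where b: "b = lift 0 b0" using fresh_is_lift by blast
  have lower: "ssub (\<lambda>i. Var (i - 1)) (lift 0 x) = x" for x
    by (simp add: to_ssub) (rule ssub_id, simp add: index_defs)
  from step_ssub[OF st, of "\<lambda>i. Var (i - 1)"] have "step a b0" by (simp only: b lower)
  with b show ?thesis by blast
qed

section \<open>The equations as a symmetric generator\<close>

text \<open>The equations, with the side conditions on free variables absorbed by writing the
  relevant jump arguments as lifted terms; both orientations of the non-symmetric equations
  are included.\<close>

inductive eq_ax :: "bool \<Rightarrow> trm \<Rightarrow> trm \<Rightarrow> bool" for b where
  cs: "eq_ax b (Sub (Sub t (lift 0 s)) v) (Sub (Sub (swap 0 t) (lift 0 v)) s)"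
| lam_out: "b \<Longrightarrow> eq_ax b (Lam (Sub t (lift 0 s))) (Sub (Lam (swap 0 t)) s)"
| lam_in: "b \<Longrightarrow> eq_ax b (Sub (Lam t) s) (Lam (Sub (swap 0 t) (lift 0 s)))"
| app_out: "b \<Longrightarrow> eq_ax b (App (Sub t s) v) (Sub (App t (lift 0 v)) s)"
| app_in: "b \<Longrightarrow> eq_ax b (Sub (App t (lift 0 v)) s) (App (Sub t s) v)"

inductive eq_step :: "bool \<Rightarrow> trm \<Rightarrow> trm \<Rightarrow> bool" for b where
  ax: "eq_ax b x y \<Longrightarrow> eq_step b x y"
| lam: "eq_step b t t' \<Longrightarrow> eq_step b (Lam t) (Lam t')"
| appl: "eq_step b t t' \<Longrightarrow> eq_step b (App t u) (App t' u)"
| appr: "eq_step b u u' \<Longrightarrow> eq_step b (App t u) (App t u')"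
| subl: "eq_step b t t' \<Longrightarrow> eq_step b (Sub t u) (Sub t' u)"
| subr: "eq_step b u u' \<Longrightarrow> eq_step b (Sub t u) (Sub t u')"

abbreviation eqv :: "bool \<Rightarrow> trm \<Rightarrow> trm \<Rightarrow> bool" where
  "eqv b \<equiv> (eq_step b)\<^sup>*\<^sup>*"

lemma eq_ax_sym: "eq_ax b x y \<Longrightarrow> eq_ax b y x"
proof (induction rule: eq_ax.induct)
  case (cs t s v) show ?case using eq_ax.cs[of b "swap 0 t" v s] by (simp add: swap_swap)
next
  case (lam_out t s) show ?case using eq_ax.lam_in[of b "swap 0 t" s] lam_out by (simp add: swap_swap)
next
  case (lam_in t s) show ?case using eq_ax.lam_out[of b "swap 0 t" s] lam_in by (simp add: swap_swap)
qed (auto intro: eq_ax.intros)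

lemma eq_ax_occ: "eq_ax b x y \<Longrightarrow> occ k x = occ k y"
  by (induction arbitrary: k rule: eq_ax.induct) (simp_all add: occ_simps)

lemma eq_ax_ssub: "eq_ax b x y \<Longrightarrow> eq_ax b (ssub s x) (ssub s y)"
proof (induction rule: eq_ax.induct)
  case (cs t s' v) show ?case
    using eq_ax.cs[of b "ssub (up_sub (up_sub s)) t" "ssub s s'" "ssub s v"]
    by (simp add: ssub_lift0 ssub_swap0)
next
  case (lam_out t s') show ?case
    using eq_ax.lam_out[of b "ssub (up_sub (up_sub s)) t" "ssub s s'"] lam_out
    by (simp add: ssub_lift0 ssub_swap0)
next
  case (lam_in t s') show ?case
    using eq_ax.lam_in[of b "ssub (up_sub (up_sub s)) t" "ssub s s'"] lam_in
    by (simp add: ssub_lift0 ssub_swap0)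
next
  case (app_out t s' v) show ?case
    using eq_ax.app_out[of b "ssub (up_sub s) t" "ssub s s'" "ssub s v"] app_out
    by (simp add: ssub_lift0)
next
  case (app_in t v s') show ?case
    using eq_ax.app_in[of b "ssub (up_sub s) t" "ssub s v" "ssub s s'"] app_in
    by (simp add: ssub_lift0)
qed

text \<open>An equation applied to a renamed term is the renaming of an equation.  This is needed
  because the contraction rule is phrased through the renaming colf.\<close>

lemma eq_ax_ren_inv: "eq_ax b (ren f x') y \<Longrightarrow> \<exists>y'. eq_ax b x' y' \<and> y = ren f y'"
proof (induction "ren f x'" y arbitrary: f x' rule: eq_ax.induct)
  case (cs t s v)
  then obtain t1 s1 v1 where "x' = Sub (Sub t1 (lift 0 s1)) v1"
    and "t = ren (up_ren (up_ren f)) t1" "s = ren f s1" "v = ren f v1"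
    by (metis ren_Sub ren_lift_inv)
  then show ?case by (intro exI[of _ "Sub (Sub (swap 0 t1) (lift 0 v1)) s1"])
    (simp add: eq_ax.cs ren_swap0 ren_lift0)
next
  case (lam_out t s)
  then obtain t1 s1 where "x' = Lam (Sub t1 (lift 0 s1))"
    and "t = ren (up_ren (up_ren f)) t1" "s = ren f s1"
    by (metis ren_Lam ren_Sub ren_lift_inv)
  then show ?case by (intro exI[of _ "Sub (Lam (swap 0 t1)) s1"])
    (simp add: eq_ax.lam_out lam_out(1) ren_swap0 ren_lift0)
next
  case (lam_in t s)
  then obtain t1 s1 where "x' = Sub (Lam t1) s1" and "t = ren (up_ren (up_ren f)) t1" "s = ren f s1"
    by (metis ren_Lam ren_Sub)
  then show ?case by (intro exI[of _ "Lam (Sub (swap 0 t1) (lift 0 s1))"])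
    (simp add: eq_ax.lam_in lam_in(1) ren_swap0 ren_lift0)
next
  case (app_out t s v)
  then obtain t1 s1 v1 where "x' = App (Sub t1 s1) v1"
    and "t = ren (up_ren f) t1" "s = ren f s1" "v = ren f v1"
    by (metis ren_App ren_Sub)
  then show ?case by (intro exI[of _ "Sub (App t1 (lift 0 v1)) s1"])
    (simp add: eq_ax.app_out app_out(1) ren_lift0)
next
  case (app_in t v s)
  then obtain t1 s1 v1 where "x' = Sub (App t1 (lift 0 v1)) s1"
    and "t = ren (up_ren f) t1" "s = ren f s1" "v = ren f v1"
    by (metis ren_App ren_Sub ren_lift_inv)
  then show ?case by (intro exI[of _ "App (Sub t1 s1) v1"])
    (simp add: eq_ax.app_in app_in(1) ren_lift0)
qed

lemma eq_step_sym: "eq_step b x y \<Longrightarrow> eq_step b y x"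
  by (induction rule: eq_step.induct) (auto intro: eq_step.intros eq_ax_sym)

lemma eq_step_occ: "eq_step b x y \<Longrightarrow> occ k x = occ k y"
  by (induction arbitrary: k rule: eq_step.induct) (auto dest: eq_ax_occ)

lemma eq_step_ssub: "eq_step b x y \<Longrightarrow> eq_step b (ssub s x) (ssub s y)"
  by (induction arbitrary: s rule: eq_step.induct) (auto intro: eq_step.intros eq_ax_ssub)

lemma eq_step_ren_inv: "eq_step b (ren f x') y \<Longrightarrow> \<exists>y'. eq_step b x' y' \<and> y = ren f y'"
proof (induction "ren f x'" y arbitrary: f x' rule: eq_step.induct)
  case (ax y) then show ?case by (meson eq_ax_ren_inv eq_step.ax)
next
  case (lam t t') then show ?case by (metis eq_step.lam ren_Lam ren.simps(2))
next
  case (appl t t' u) then show ?case by (metis eq_step.appl ren_App ren.simps(3))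
next
  case (appr u u' t) then show ?case by (metis eq_step.appr ren_App ren.simps(3))
next
  case (subl t t' u) then show ?case by (metis eq_step.subl ren_Sub ren.simps(4))
next
  case (subr u u' t) then show ?case by (metis eq_step.subr ren_Sub ren.simps(4))
qed

lemma eqv_map:
  assumes "\<And>x y. eq_step b x y \<Longrightarrow> eq_step b (F x) (F y)"
  shows "eqv b x y \<Longrightarrow> eqv b (F x) (F y)"
  by (induction rule: rtranclp_induct) (auto intro: rtranclp.rtrancl_into_rtrancl assms)

lemma eqv_sym: "eqv b x y \<Longrightarrow> eqv b y x"
  by (metis eq_step_sym symp_rtranclp sympD sympI)

lemma eqv_ax: "eq_ax b x y \<Longrightarrow> eqv b x y"
  by (intro r_into_rtranclp eq_step.ax)

lemma eqv_lam: "eqv b x y \<Longrightarrow> eqv b (Lam x) (Lam y)"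
  by (rule eqv_map) (rule eq_step.lam)

lemma eqv_app: "eqv b x y \<Longrightarrow> eqv b u v \<Longrightarrow> eqv b (App x u) (App y v)"
  using eqv_map[of b "\<lambda>x. App x u" x y] eqv_map[of b "App y" u v]
  by (meson eq_step.appl eq_step.appr rtranclp_trans)

lemma eqv_sub: "eqv b x y \<Longrightarrow> eqv b u v \<Longrightarrow> eqv b (Sub x u) (Sub y v)"
  using eqv_map[of b "\<lambda>x. Sub x u" x y] eqv_map[of b "Sub y" u v]
  by (meson eq_step.subl eq_step.subr rtranclp_trans)

lemma eqv_ssub: "eqv b x y \<Longrightarrow> eqv b (ssub s x) (ssub s y)"
  by (rule eqv_map) (rule eq_step_ssub)

lemma eqv_lift: "eqv b x y \<Longrightarrow> eqv b (lift k x) (lift k y)"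
  by (simp add: lift_ren ren_as_ssub eqv_ssub)

lemma eqv_liftn: "eqv b x y \<Longrightarrow> eqv b ((lift 0 ^^ n) x) ((lift 0 ^^ n) y)"
  by (induction n) (auto intro: eqv_lift)

lemma eqv_jumps: "eqv b x y \<Longrightarrow> eqv b (jumps x L) (jumps y L)"
  by (induction L arbitrary: x y) (auto intro: eqv_sub)

lemma eqv_ssub_pointwise: "(\<And>i. eqv b (s i) (r i)) \<Longrightarrow> eqv b (ssub s t) (ssub r t)"
proof (induction t arbitrary: s r)
  case (Lam t)
  have "eqv b (ssub (up_sub s) t) (ssub (up_sub r) t)"
    by (rule Lam.IH) (auto simp: up_sub_def Lam.prems lift0[symmetric] eqv_lift split: nat.split)
  then show ?case by (simp add: eqv_lam)
next
  case (App t u)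
  show ?case by (simp add: eqv_app App.IH App.prems)
next
  case (Sub t u)
  have "eqv b (ssub (up_sub s) t) (ssub (up_sub r) t)"
    by (rule Sub.IH(1)) (auto simp: up_sub_def Sub.prems lift0[symmetric] eqv_lift split: nat.split)
  then show ?case by (simp add: eqv_sub Sub.IH(2) Sub.prems)
qed simp

lemma cs_ax_eq_ax: assumes "cs_ax x y" shows "eq_ax b x y"
  using assms
proof (cases rule: cs_ax.cases)
  case (1 s t v)
  then obtain s0 where "s = lift 0 s0" using fresh_is_lift by blast
  then show ?thesis using eq_ax.cs[of b t s0 v] 1 by (simp add: down_lift)
qed

lemma o_ax_eq_ax: assumes "o_ax x y" shows "eq_ax True x y"
  using assms
proof (cases rule: o_ax.cases)
  case (o_lam s t)
  then obtain s0 where "s = lift 0 s0" using fresh_is_lift by blast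
  then show ?thesis using eq_ax.lam_out[of True t s0] o_lam by (simp add: down_lift)
qed (auto intro: cs_ax_eq_ax eq_ax.app_out)

lemma axioms_eq_ax: "(if b then o_ax else cs_ax) x y \<Longrightarrow> eq_ax b x y"
  by (cases b) (auto intro: cs_ax_eq_ax o_ax_eq_ax)

lemma eq_ax_axioms: "eq_ax b x y \<Longrightarrow> ctx_eq (if b then o_ax else cs_ax) x y"
proof (induction rule: eq_ax.induct)
  case (cs t s v)
  have "cs_ax (Sub (Sub t (lift 0 s)) v) (Sub (Sub (swap 0 t) (lift 0 v)) s)"
    using cs_ax.intros[of "lift 0 s" t v] by (simp add: notin_fv_lift down_lift)
  then show ?case by (cases b) (auto intro: ctx_eq.intros o_ax.intros)
next
  case (lam_out t s)
  have "o_ax (Lam (Sub t (lift 0 s))) (Sub (Lam (swap 0 t)) s)"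
    using o_lam[of "lift 0 s" t] by (simp add: notin_fv_lift down_lift)
  then show ?case using lam_out by (auto intro: ctx_eq.intros)
next
  case (lam_in t s)
  have "o_ax (Lam (Sub (swap 0 t) (lift 0 s))) (Sub (Lam t) s)"
    using o_lam[of "lift 0 s" "swap 0 t"] by (simp add: notin_fv_lift down_lift swap_swap)
  then show ?case using lam_in by (auto intro: ctx_eq.intros)
qed (auto intro: ctx_eq.intros o_ax.intros)

lemma ctx_eq_eqv: "ctx_eq (if b then o_ax else cs_ax) = eqv b"
proof (intro ext iffI)
  fix x y
  assume "ctx_eq (if b then o_ax else cs_ax) x y"
  then show "eqv b x y"
    by (induction rule: ctx_eq.induct)
       (auto intro: eqv_ax axioms_eq_ax eqv_sym rtranclp_trans eqv_lam eqv_app eqv_sub)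
next
  fix x y
  have step: "ctx_eq (if b then o_ax else cs_ax) x y" if "eq_step b x y" for x y
    using that by (induction rule: eq_step.induct) (blast intro: ctx_eq.intros eq_ax_axioms)+
  assume "eqv b x y"
  then show "ctx_eq (if b then o_ax else cs_ax) x y"
    by (induction rule: rtranclp_induct) (blast intro: ctx_eq.eq_refl ctx_eq.eq_trans step)+
qed

section \<open>Equations inside the function part of a dB redex\<close>

definition dB_reduct :: "trm \<Rightarrow> trm list \<Rightarrow> trm \<Rightarrow> trm" where
  "dB_reduct t L u = jumps (Sub t ((lift 0 ^^ length L) u)) L"

lemma root_dB: "root (App (jumps (Lam t) L) u) (dB_reduct t L u)"
  unfolding dB_reduct_def by (rule root.dB)

lemma root_App_cases[consumes 1]:
  assumes "root (App F u) X"
  obtains t L where "F = jumps (Lam t) L" "X = dB_reduct t L u"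
  using root_App_dB[OF assms] that unfolding dB_reduct_def by blast

lemma dB_reduct_snoc: "dB_reduct t (L @ [v]) u = Sub (dB_reduct t L (lift 0 u)) v"
  by (simp add: dB_reduct_def jumps_snoc funpow_Suc_right del: funpow.simps)

text \<open>The equation t[x/s][y/v] = t[y/v][x/s] applied to the two outermost jumps of an
  abstraction: the dB-reducts differ by the same equation, the body being renamed by swap.\<close>

lemma cs_jumps_Lam:
  assumes "Sub (Sub a (lift 0 s)) v = jumps (Lam t) L"
  shows "\<exists>t0 L0. Sub (Sub (swap 0 a) (lift 0 v)) s = jumps (Lam t0) L0 \<and>
    (\<forall>u. eqv b (dB_reduct t L u) (dB_reduct t0 L0 u))"
proof -
  from jumps_Lam_Sub[OF assms[symmetric]] obtain L1 where L: "L = L1 @ [v]"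
    and inner: "Sub a (lift 0 s) = jumps (Lam t) L1"
    by blast
  from jumps_Lam_Sub[OF inner[symmetric]] obtain L2 where L1: "L1 = L2 @ [lift 0 s]"
    and a: "a = jumps (Lam t) L2"
    by blast
  define \<sigma> where "\<sigma> = Var \<circ> swapf 0"
  define n where "n = length L2"
  define t0 where "t0 = ssub (up_sub ((up_sub ^^ n) \<sigma>)) t"
  have sw: "swap 0 x = ssub \<sigma> x" for x by (simp add: \<sigma>_def swap_ren ren_as_ssub)
  show ?thesis
  proof (intro exI conjI allI)
    show "Sub (Sub (swap 0 a) (lift 0 v)) s = jumps (Lam t0) (ssub_list \<sigma> L2 @ [lift 0 v, s])"
      by (simp add: a sw ssub_jumps jumps_snoc[symmetric] t0_def n_def)
    fix u
    define W where "W = (lift 0 ^^ n) (lift 0 (lift 0 u))"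
    have W: "ssub ((up_sub ^^ n) \<sigma>) W = W"
      by (simp add: W_def ssub_liftn \<sigma>_def swap_lift_lift[unfolded swap_ren ren_as_ssub])
    have "eqv b (Sub (Sub (jumps (Sub t W) L2) (lift 0 s)) v)
                (Sub (Sub (swap 0 (jumps (Sub t W) L2)) (lift 0 v)) s)"
      by (rule eqv_ax, rule eq_ax.cs)
    moreover have "swap 0 (jumps (Sub t W) L2) = jumps (Sub t0 W) (ssub_list \<sigma> L2)"
      by (simp add: sw ssub_jumps t0_def n_def[symmetric] W)
    moreover have "L = (L2 @ [lift 0 s]) @ [v]"
      and "ssub_list \<sigma> L2 @ [lift 0 v, s] = (ssub_list \<sigma> L2 @ [lift 0 v]) @ [s]"
      by (simp_all add: L L1)
    ultimately show "eqv b (dB_reduct t L u) (dB_reduct t0 (ssub_list \<sigma> L2 @ [lift 0 v, s]) u)"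
      by (simp only: dB_reduct_snoc) (simp add: dB_reduct_def W_def n_def)
  qed
qed

lemma eq_ax_jumps_Lam:
  "eq_ax b (jumps (Lam t) L) X \<Longrightarrow>
     \<exists>t0 L0. X = jumps (Lam t0) L0 \<and> (\<forall>u. eqv b (dB_reduct t L u) (dB_reduct t0 L0 u))"
proof (induction "jumps (Lam t) L" X rule: eq_ax.induct)
  case (cs a s v) then show ?case by (rule cs_jumps_Lam)
next
  case (lam_out a s)
  from jumps_Lam_Lam[OF lam_out(2)[symmetric]] have L: "L = []" and t: "t = Sub a (lift 0 s)"
    by auto
  show ?case
  proof (intro exI conjI allI)
    show "Sub (Lam (swap 0 a)) s = jumps (Lam (swap 0 a)) [s]" by simp
    fix u show "eqv b (dB_reduct t L u) (dB_reduct (swap 0 a) [s] u)"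
      using eq_ax.cs[of b a s u] by (simp add: dB_reduct_def L t eqv_ax)
  qed
next
  case (lam_in a s)
  from jumps_Lam_Sub[OF lam_in(2)[symmetric]] obtain L1 where L: "L = L1 @ [s]"
    and inner: "Lam a = jumps (Lam t) L1"
    by blast
  from jumps_Lam_Lam[OF inner[symmetric]] have L1: "L1 = []" and a: "a = t" by auto
  show ?case
  proof (intro exI conjI allI)
    show "Lam (Sub (swap 0 a) (lift 0 s)) = jumps (Lam (Sub (swap 0 a) (lift 0 s))) []" by simp
    fix u show "eqv b (dB_reduct t L u) (dB_reduct (Sub (swap 0 a) (lift 0 s)) [] u)"
      using eq_ax.cs[of b t u s] by (simp add: dB_reduct_def L L1 a eqv_ax)
  qed
next
  case (app_out a s v) then show ?case using jumps_Lam_App by metis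
next
  case (app_in a v s)
  from jumps_Lam_Sub[OF app_in(2)[symmetric]] obtain L1 where "App a (lift 0 v) = jumps (Lam t) L1"
    by blast
  then show ?case using jumps_Lam_App by metis
qed

lemma eq_step_jumps_Lam:
  "eq_step b (jumps (Lam t) L) X \<Longrightarrow>
     \<exists>t0 L0. X = jumps (Lam t0) L0 \<and> (\<forall>u. eqv b (dB_reduct t L u) (dB_reduct t0 L0 u))"
proof (induction L arbitrary: X rule: rev_induct)
  case Nil
  then have "eq_step b (Lam t) X" by simp
  then show ?case
  proof (cases rule: eq_step.cases)
    case ax then show ?thesis using eq_ax_jumps_Lam[of b t "[]" X] by simp
  next
    case (lam t')
    then show ?thesis
      by (intro exI[of _ t'] exI[of _ "[]"])
         (auto simp: dB_reduct_def intro: eqv_sub r_into_rtranclp)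
  qed
next
  case (snoc v L)
  from snoc.prems have "eq_step b (Sub (jumps (Lam t) L) v) X" by (simp add: jumps_snoc)
  then show ?case
  proof (cases rule: eq_step.cases)
    case ax then show ?thesis using eq_ax_jumps_Lam[of b t "L @ [v]" X] by (simp add: jumps_snoc)
  next
    case (subl Y)
    from snoc.IH[OF subl(2)] obtain t0 L0 where Y: "Y = jumps (Lam t0) L0"
      and e: "\<And>u. eqv b (dB_reduct t L u) (dB_reduct t0 L0 u)"
      by blast
    show ?thesis
    proof (intro exI conjI allI)
      show "X = jumps (Lam t0) (L0 @ [v])" by (simp add: subl Y jumps_snoc)
      fix u show "eqv b (dB_reduct t (L @ [v]) u) (dB_reduct t0 (L0 @ [v]) u)"
        using e[of "lift 0 u"] by (simp add: dB_reduct_snoc eqv_sub)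
    qed
  next
    case (subr v')
    show ?thesis
    proof (intro exI conjI allI)
      show "X = jumps (Lam t) (L @ [v'])" by (simp add: subr jumps_snoc)
      fix u show "eqv b (dB_reduct t (L @ [v]) u) (dB_reduct t (L @ [v']) u)"
        using subr by (simp add: dB_reduct_snoc eqv_sub r_into_rtranclp)
    qed
  qed
qed

section \<open>Local commutation of equations and reduction\<close>

definition simulates :: "bool \<Rightarrow> trm \<Rightarrow> trm \<Rightarrow> bool" where
  "simulates b y x' \<longleftrightarrow> (\<exists>y'. step y y' \<and> eqv b x' y')"

lemma simulatesI: "step y y' \<Longrightarrow> eqv b x' y' \<Longrightarrow> simulates b y x'"
  unfolding simulates_def by blast

lemma simulates_step: "step y x' \<Longrightarrow> simulates b y x'"
  by (blast intro: simulatesI rtranclp.rtrancl_refl)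

lemma simulates_eq_ax: "step y y' \<Longrightarrow> eq_ax b x' y' \<Longrightarrow> simulates b y x'"
  by (blast intro: simulatesI eqv_ax)

lemma cs_outer_root:
  assumes "root (Sub (Sub t (lift 0 s)) v) x'"
  shows "simulates b (Sub (Sub (swap 0 t) (lift 0 v)) s) x'"
  using assms
proof (cases rule: root_Sub_cases)
  case (weak t0)
  from lift0_Sub[OF weak(1)[symmetric]] obtain a s' where t0: "t0 = Sub a s'"
    and t: "t = lift (Suc 0) a" and "lift 0 s = lift 0 s'" by blast
  then have "x' = Sub a s" using weak(2) lift_inj by metis
  moreover have "step (Sub (Sub (swap 0 t) (lift 0 v)) s) (Sub a s)"
    by (simp add: t swap_lift1 step_subl step_weak)
  ultimately show ?thesis by (simp add: simulates_step)
next
  case deref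
  have "occ (Suc 0) t = 1" using deref(1) by (simp add: occ_simps)
  then have "step (Sub (Sub (swap 0 t) (lift 0 v)) s) (Sub (subst 0 (lift 0 v) (swap 0 t)) s)"
    by (intro step_subl step_root root.d) (simp add: occ_simps)
  then show ?thesis by (auto simp: deref(2) subst_lift subst_swap intro: simulates_step)
next
  case (contr T')
  from ren_Sub[OF contr(1)[symmetric]] obtain t2 S2 where T': "T' = Sub t2 S2"
    and t: "t = ren (up_ren (colf 0)) t2" and S: "lift 0 s = ren (colf 0) S2" by blast
  have S2: "S2 = lift 0 (lift 0 s)" using colf_lift_inv S by metis
  have p0: "1 \<le> occ (Suc 0) t2" and p1: "1 \<le> occ (Suc (Suc 0)) t2"
    using contr(2,3) by (simp_all add: T' S2 occ_simps)
  define y' where "y' = Sub (Sub (Sub (swap (Suc 0) (swap 0 t2)) (lift 0 (lift 0 v))) (lift 0 v)) s"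
  have "step (Sub (Sub (ren (colf 0) (swap (Suc 0) (swap 0 t2))) (lift 0 v)) s) y'"
    unfolding y'_def using p0 p1 by (intro step_subl step_root root_contr) (simp_all add: occ_simps)
  then have st: "step (Sub (Sub (swap 0 t) (lift 0 v)) s) y'" by (simp add: colf_swap_swap' t)
  have "eqv b x' (Sub (Sub (Sub (swap 0 t2) (lift 0 (lift 0 v))) (lift 0 s)) v)"
    unfolding contr(4) T' S2 by (intro eqv_sub rtranclp.rtrancl_refl eqv_ax eq_ax.cs)
  also have "eqv b \<dots> y'"
    using eqv_ax[OF eq_ax.cs[of b "Sub (swap 0 t2) (lift 0 (lift 0 v))" s v]]
    by (simp add: y'_def swap_lift_lift)
  finally show ?thesis using st by (blast intro: simulatesI)
qed

lemma cs_inner_root: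
  assumes "root (Sub t (lift 0 s)) X"
  shows "simulates b (Sub (Sub (swap 0 t) (lift 0 v)) s) (Sub X v)"
  using assms
proof (cases rule: root_Sub_cases)
  case (weak t0)
  have "Sub (Sub (swap 0 t) (lift 0 v)) s = Sub (lift 0 (Sub t0 v)) s"
    by (simp add: weak(1) swap_lift0)
  then show ?thesis using step_weak[of "Sub t0 v" s] weak(2) by (simp add: simulates_step)
next
  case deref
  have "step (Sub (Sub (swap 0 t) (lift 0 v)) s) (subst 0 s (Sub (swap 0 t) (lift 0 v)))"
    using deref(1) by (intro step_root root.d) (simp add: occ_simps)
  then show ?thesis by (auto simp: deref(2) subst_Suc_swap subst_lift intro: simulates_step)
next
  case (contr t1)
  define y' where "y' = Sub (Sub (Sub (swap 0 (swap (Suc 0) t1)) (lift 0 (lift 0 v))) (lift 0 s)) s"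
  have "Sub (swap 0 t) (lift 0 v) = ren (colf 0) (Sub (swap 0 (swap (Suc 0) t1)) (lift 0 (lift 0 v)))"
    by (simp add: contr(1) colf_swap_swap colf_lift_lift)
  moreover have "step (Sub (ren (colf 0) (Sub (swap 0 (swap (Suc 0) t1)) (lift 0 (lift 0 v)))) s) y'"
    unfolding y'_def using contr(2,3) by (intro step_root root_contr) (simp_all add: occ_simps)
  ultimately have st: "step (Sub (Sub (swap 0 t) (lift 0 v)) s) y'" by simp
  have "eqv b (Sub X v) (Sub (Sub (Sub (swap (Suc 0) t1) (lift 0 (lift 0 s))) (lift 0 v)) s)"
    using eqv_ax[OF eq_ax.cs[of b "Sub t1 (lift 0 (lift 0 s))" s v]]
    by (simp add: contr(4) swap_lift_lift)
  also have "eqv b \<dots> y'"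
    unfolding y'_def by (intro eqv_sub rtranclp.rtrancl_refl eqv_ax eq_ax.cs)
  finally show ?thesis using st by (blast intro: simulatesI)
qed

lemma cs_sim:
  assumes "step (Sub (Sub t (lift 0 s)) v) x'"
  shows "simulates b (Sub (Sub (swap 0 t) (lift 0 v)) s) x'"
  using assms
proof (cases rule: step_Sub_cases)
  case root then show ?thesis by (rule cs_outer_root)
next
  case (left X)
  from left(2) show ?thesis
  proof (cases rule: step_Sub_cases)
    case root then show ?thesis unfolding left(1) by (rule cs_inner_root)
  next
    case (left t1)
    then show ?thesis using \<open>x' = Sub X v\<close>
      by (auto intro: simulates_eq_ax step_subl step_swap eq_ax.cs)
  next
    case (right S1)
    from step_lift_inv[OF right(2)] obtain s1 where "S1 = lift 0 s1" "step s s1" by blast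
    then show ?thesis using \<open>x' = Sub X v\<close> right(1)
      by (auto intro: simulates_eq_ax step_subr eq_ax.cs)
  qed
next
  case (right v1)
  then show ?thesis by (auto intro: simulates_eq_ax step_subl step_subr step_lift eq_ax.cs)
qed

lemma lam_out_inner_root:
  assumes b and "root (Sub t (lift 0 s)) X"
  shows "simulates b (Sub (Lam (swap 0 t)) s) (Lam X)"
  using assms(2)
proof (cases rule: root_Sub_cases)
  case (weak t0)
  have "Sub (Lam (swap 0 t)) s = Sub (lift 0 (Lam t0)) s" by (simp add: weak(1) swap_lift0)
  then show ?thesis using step_weak[of "Lam t0" s] weak(2) by (simp add: simulates_step)
next
  case deref
  have "step (Sub (Lam (swap 0 t)) s) (subst 0 s (Lam (swap 0 t)))"
    using deref(1) by (intro step_root root.d) (simp add: occ_simps)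
  then show ?thesis by (auto simp: deref(2) subst_Suc_swap intro: simulates_step)
next
  case (contr t1)
  define y' where "y' = Sub (Sub (Lam (swap 0 (swap (Suc 0) t1))) (lift 0 s)) s"
  have "Lam (swap 0 t) = ren (colf 0) (Lam (swap 0 (swap (Suc 0) t1)))"
    by (simp add: contr(1) colf_swap_swap)
  moreover have "step (Sub (ren (colf 0) (Lam (swap 0 (swap (Suc 0) t1)))) s) y'"
    unfolding y'_def using contr(2,3) by (intro step_root root_contr) (simp_all add: occ_simps)
  ultimately have st: "step (Sub (Lam (swap 0 t)) s) y'" by simp
  have "eqv b (Lam X) (Sub (Lam (Sub (swap (Suc 0) t1) (lift 0 (lift 0 s)))) s)"
    using eqv_ax[OF eq_ax.lam_out[of b "Sub t1 (lift 0 (lift 0 s))" s]] \<open>b\<close>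
    by (simp add: contr(4) swap_lift_lift)
  also have "eqv b \<dots> y'"
    unfolding y'_def using \<open>b\<close> by (intro eqv_sub rtranclp.rtrancl_refl eqv_ax eq_ax.lam_out)
  finally show ?thesis using st by (blast intro: simulatesI)
qed

lemma lam_out_sim:
  assumes b and "step (Lam (Sub t (lift 0 s))) x'"
  shows "simulates b (Sub (Lam (swap 0 t)) s) x'"
proof -
  from assms(2) obtain X where x': "x' = Lam X" and "step (Sub t (lift 0 s)) X"
    by (cases rule: step_Lam_cases)
  from this(2) show ?thesis
  proof (cases rule: step_Sub_cases)
    case root then show ?thesis unfolding x' by (rule lam_out_inner_root[OF \<open>b\<close>])
  next
    case (left t1)
    then show ?thesis using x' \<open>b\<close>
      by (auto intro: simulates_eq_ax step_subl step_lam step_swap eq_ax.lam_out)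
  next
    case (right S1)
    from step_lift_inv[OF right(2)] obtain s1 where "S1 = lift 0 s1" "step s s1" by blast
    then show ?thesis using x' right(1) \<open>b\<close> by (auto intro: simulates_eq_ax step_subr eq_ax.lam_out)
  qed
qed

lemma lam_in_root:
  assumes b and "root (Sub (Lam t) s) x'"
  shows "simulates b (Lam (Sub (swap 0 t) (lift 0 s))) x'"
  using assms(2)
proof (cases rule: root_Sub_cases)
  case (weak t0)
  from lift0_Lam[OF weak(1)[symmetric]] obtain a where "t0 = Lam a" and t: "t = lift (Suc 0) a"
    by blast
  moreover have "step (Lam (Sub (swap 0 t) (lift 0 s))) (Lam a)"
    by (simp add: t swap_lift1 step_lam step_weak)
  ultimately show ?thesis using weak(2) by (simp add: simulates_step)
next
  case deref
  have "step (Lam (Sub (swap 0 t) (lift 0 s))) (Lam (subst 0 (lift 0 s) (swap 0 t)))"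
    using deref(1) by (intro step_lam step_root root.d) (simp add: occ_simps)
  then show ?thesis by (auto simp: deref(2) subst_swap intro: simulates_step)
next
  case (contr T')
  from ren_Lam[OF contr(1)[symmetric]] obtain t2 where T': "T' = Lam t2"
    and t: "t = ren (up_ren (colf 0)) t2" by blast
  have p0: "1 \<le> occ (Suc 0) t2" and p1: "1 \<le> occ (Suc (Suc 0)) t2"
    using contr(2,3) by (simp_all add: T')
  define y' where "y' = Lam (Sub (Sub (swap (Suc 0) (swap 0 t2)) (lift 0 (lift 0 s))) (lift 0 s))"
  have "step (Lam (Sub (ren (colf 0) (swap (Suc 0) (swap 0 t2))) (lift 0 s))) y'"
    unfolding y'_def using p0 p1 by (intro step_lam step_root root_contr) (simp_all add: occ_simps)
  then have st: "step (Lam (Sub (swap 0 t) (lift 0 s))) y'" by (simp add: colf_swap_swap' t)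
  have "eqv b x' (Sub (Lam (Sub (swap 0 t2) (lift 0 (lift 0 s)))) s)"
    unfolding contr(4) T' using \<open>b\<close> by (intro eqv_sub rtranclp.rtrancl_refl eqv_ax eq_ax.lam_in)
  also have "eqv b \<dots> y'"
    using eqv_ax[OF eq_ax.lam_in[of b "Sub (swap 0 t2) (lift 0 (lift 0 s))" s]] \<open>b\<close>
    by (simp add: y'_def swap_lift_lift)
  finally show ?thesis using st by (blast intro: simulatesI)
qed

lemma lam_in_sim:
  assumes b and "step (Sub (Lam t) s) x'"
  shows "simulates b (Lam (Sub (swap 0 t) (lift 0 s))) x'"
  using assms(2)
proof (cases rule: step_Sub_cases)
  case root then show ?thesis using \<open>b\<close> by (intro lam_in_root)
next
  case (left X)
  from left(2) obtain t1 where "X = Lam t1" "step t t1" by (cases rule: step_Lam_cases)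
  then show ?thesis using left(1) \<open>b\<close>
    by (auto intro: simulates_eq_ax step_lam step_subl step_swap eq_ax.lam_in)
next
  case (right s1)
  then show ?thesis using \<open>b\<close> by (auto intro: simulates_eq_ax step_lam step_subr step_lift eq_ax.lam_in)
qed

lemma app_out_inner_root:
  assumes b and "root (Sub t s) X"
  shows "simulates b (Sub (App t (lift 0 v)) s) (App X v)"
  using assms(2)
proof (cases rule: root_Sub_cases)
  case (weak t0)
  have "Sub (App t (lift 0 v)) s = Sub (lift 0 (App t0 v)) s" by (simp add: weak(1))
  then show ?thesis using step_weak[of "App t0 v" s] weak(2) by (simp add: simulates_step)
next
  case deref
  have "step (Sub (App t (lift 0 v)) s) (subst 0 s (App t (lift 0 v)))"
    using deref(1) by (intro step_root root.d) (simp add: occ_simps)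
  then show ?thesis by (auto simp: deref(2) subst_lift intro: simulates_step)
next
  case (contr t1)
  define y' where "y' = Sub (Sub (App t1 (lift 0 (lift 0 v))) (lift 0 s)) s"
  have "App t (lift 0 v) = ren (colf 0) (App t1 (lift 0 (lift 0 v)))"
    by (simp add: contr(1) colf_lift_lift)
  moreover have "step (Sub (ren (colf 0) (App t1 (lift 0 (lift 0 v)))) s) y'"
    unfolding y'_def using contr(2,3) by (intro step_root root_contr) (simp_all add: occ_simps)
  ultimately have st: "step (Sub (App t (lift 0 v)) s) y'" by simp
  have "eqv b (App X v) (Sub (App (Sub t1 (lift 0 s)) (lift 0 v)) s)"
    unfolding contr(4) using \<open>b\<close> by (intro eqv_ax eq_ax.app_out)
  also have "eqv b \<dots> y'"
    unfolding y'_def using \<open>b\<close> by (intro eqv_sub rtranclp.rtrancl_refl eqv_ax eq_ax.app_out)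
  finally show ?thesis using st by (blast intro: simulatesI)
qed

lemma app_out_sim:
  assumes b and "step (App (Sub t s) v) x'"
  shows "simulates b (Sub (App t (lift 0 v)) s) x'"
  using assms(2)
proof (cases rule: step_App_cases)
  case root
  then obtain t0 L where "Sub t s = jumps (Lam t0) L" and x': "x' = dB_reduct t0 L v"
    by (cases rule: root_App_cases)
  from jumps_Lam_Sub[OF this(1)[symmetric]] obtain L1 where L: "L = L1 @ [s]"
    and t: "t = jumps (Lam t0) L1" by blast
  have "step (Sub (App t (lift 0 v)) s) (Sub (dB_reduct t0 L1 (lift 0 v)) s)"
    unfolding t by (intro step_subl step_root root_dB)
  then show ?thesis by (simp add: x' L dB_reduct_snoc simulates_step)
next
  case (left X)
  from left(2) show ?thesis
  proof (cases rule: step_Sub_cases)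
    case root then show ?thesis unfolding left(1) by (rule app_out_inner_root[OF \<open>b\<close>])
  next
    case (left t1)
    then show ?thesis using \<open>x' = App X v\<close> \<open>b\<close>
      by (auto intro: simulates_eq_ax step_subl step_appl eq_ax.app_out)
  next
    case (right s1)
    then show ?thesis using \<open>x' = App X v\<close> \<open>b\<close>
      by (auto intro: simulates_eq_ax step_subr eq_ax.app_out)
  qed
next
  case (right v1)
  then show ?thesis using \<open>b\<close>
    by (auto intro: simulates_eq_ax step_subl step_appr step_lift eq_ax.app_out)
qed

lemma app_in_root:
  assumes b and "root (Sub (App t (lift 0 v)) s) x'"
  shows "simulates b (App (Sub t s) v) x'"
  using assms(2)
proof (cases rule: root_Sub_cases)
  case (weak t0)
  from lift0_App[OF weak(1)[symmetric]] obtain a c where t0: "t0 = App a c"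
    and t: "t = lift 0 a" and "lift 0 v = lift 0 c" by blast
  then have "x' = App a v" using weak(2) lift_inj by metis
  moreover have "step (App (Sub t s) v) (App a v)" by (simp add: t step_appl step_weak)
  ultimately show ?thesis by (simp add: simulates_step)
next
  case deref
  have "step (App (Sub t s) v) (App (subst 0 s t) v)"
    using deref(1) by (intro step_appl step_root root.d) (simp add: occ_simps)
  then show ?thesis by (auto simp: deref(2) subst_lift intro: simulates_step)
next
  case (contr T')
  from ren_App[OF contr(1)[symmetric]] obtain t2 V2 where T': "T' = App t2 V2"
    and t: "t = ren (colf 0) t2" and V: "lift 0 v = ren (colf 0) V2" by blast
  have V2: "V2 = lift 0 (lift 0 v)" using colf_lift_inv V by metis
  have "1 \<le> occ 0 t2" "1 \<le> occ (Suc 0) t2" using contr(2,3) by (simp_all add: T' V2 occ_simps)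
  then have st: "step (App (Sub t s) v) (App (Sub (Sub t2 (lift 0 s)) s) v)"
    unfolding t by (intro step_appl step_root root_contr)
  have "eqv b x' (Sub (App (Sub t2 (lift 0 s)) (lift 0 v)) s)"
    unfolding contr(4) T' V2 using \<open>b\<close> by (intro eqv_sub rtranclp.rtrancl_refl eqv_ax eq_ax.app_in)
  also have "eqv b \<dots> (App (Sub (Sub t2 (lift 0 s)) s) v)"
    using \<open>b\<close> by (intro eqv_ax eq_ax.app_in)
  finally show ?thesis using st by (blast intro: simulatesI)
qed

lemma app_in_sim:
  assumes b and "step (Sub (App t (lift 0 v)) s) x'"
  shows "simulates b (App (Sub t s) v) x'"
  using assms(2)
proof (cases rule: step_Sub_cases)
  case root then show ?thesis using \<open>b\<close> by (intro app_in_root)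
next
  case (left X)
  from left(2) show ?thesis
  proof (cases rule: step_App_cases)
    case root
    then obtain t0 L where t: "t = jumps (Lam t0) L" and X: "X = dB_reduct t0 L (lift 0 v)"
      by (cases rule: root_App_cases)
    have "step (App (Sub t s) v) (dB_reduct t0 (L @ [s]) v)"
      using root_dB[of t0 "L @ [s]" v] by (simp add: t jumps_snoc step_root)
    then show ?thesis by (simp add: left(1) X dB_reduct_snoc simulates_step)
  next
    case (left t1)
    then show ?thesis using \<open>x' = Sub X s\<close> \<open>b\<close>
      by (auto intro: simulates_eq_ax step_appl step_subl eq_ax.app_in)
  next
    case (right V1)
    from step_lift_inv[OF right(2)] obtain v1 where "V1 = lift 0 v1" "step v v1" by blast
    then show ?thesis using \<open>x' = Sub X s\<close> right(1) \<open>b\<close>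
      by (auto intro: simulates_eq_ax step_appr eq_ax.app_in)
  qed
next
  case (right s1)
  then show ?thesis using \<open>b\<close> by (auto intro: simulates_eq_ax step_appl step_subr eq_ax.app_in)
qed

lemma eq_ax_sim: "eq_ax b x y \<Longrightarrow> step x x' \<Longrightarrow> simulates b y x'"
  by (induction rule: eq_ax.induct) (auto intro: cs_sim lam_out_sim lam_in_sim app_out_sim app_in_sim)

lemma simulates_eq_step: "step y y' \<Longrightarrow> eq_step b x' y' \<Longrightarrow> simulates b y x'"
  by (blast intro: simulatesI r_into_rtranclp)

text \<open>A context step in the function part of a dB redex keeps the redex (eq_step_jumps_Lam).\<close>

lemma eq_step_root_App_left:
  assumes "eq_step b t t'" and "root (App t u) x'"
  shows "simulates b (App t' u) x'"
proof -
  from assms(2) obtain t1 L where t: "t = jumps (Lam t1) L" and x': "x' = dB_reduct t1 L u"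
    by (cases rule: root_App_cases)
  from eq_step_jumps_Lam[OF assms(1)[unfolded t]] obtain t0 L0 where t': "t' = jumps (Lam t0) L0"
    and "eqv b (dB_reduct t1 L u) (dB_reduct t0 L0 u)" by blast
  then show ?thesis unfolding x' t' by (blast intro: simulatesI step_root root_dB)
qed

lemma eq_step_root_App_right:
  assumes "eq_step b u u'" and "root (App t u) x'"
  shows "simulates b (App t u') x'"
proof -
  from assms(2) obtain t1 L where t: "t = jumps (Lam t1) L" and x': "x' = dB_reduct t1 L u"
    by (cases rule: root_App_cases)
  have "eqv b (dB_reduct t1 L u) (dB_reduct t1 L u')"
    unfolding dB_reduct_def using assms(1)
    by (intro eqv_jumps eqv_sub rtranclp.rtrancl_refl eqv_liftn r_into_rtranclp)
  then show ?thesis unfolding x' t by (blast intro: simulatesI step_root root_dB)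
qed

text \<open>A context step inside the body of a jump preserves occurrences and, through the
  renamings lift 0 and colf 0, the shape required by garbage collection and contraction.\<close>

lemma eq_step_root_Sub_left:
  assumes "eq_step b t t'" and "root (Sub t u) x'"
  shows "simulates b (Sub t' u) x'"
  using assms(2)
proof (cases rule: root_Sub_cases)
  case (weak t0)
  from eq_step_ren_inv[of b Suc t0 t'] assms(1) obtain t0' where "eq_step b t0 t0'" "t' = lift 0 t0'"
    by (auto simp: weak(1) lift0)
  then show ?thesis using weak(2) by (auto intro: simulates_eq_step step_weak)
next
  case deref
  have "occ 0 t' = 1" using deref(1) eq_step_occ[OF assms(1)] by simp
  then have "step (Sub t' u) (subst 0 u t')" by (intro step_root root.d) simp
  moreover have "eqv b (subst 0 u t) (subst 0 u t')"
    unfolding subst_ssub using assms(1) by (intro eqv_ssub r_into_rtranclp)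
  ultimately show ?thesis using deref(2) by (blast intro: simulatesI)
next
  case (contr t1)
  from eq_step_ren_inv[of b "colf 0" t1 t'] assms(1) obtain t1' where e: "eq_step b t1 t1'"
    and t': "t' = ren (colf 0) t1'" by (auto simp: contr(1))
  have "1 \<le> occ 0 t1'" "1 \<le> occ (Suc 0) t1'" using contr(2,3) eq_step_occ[OF e] by simp_all
  then have "step (Sub t' u) (Sub (Sub t1' (lift 0 u)) u)" unfolding t' by (intro step_root root_contr)
  then show ?thesis using contr(4) e by (blast intro: simulates_eq_step eq_step.subl)
qed

lemma eq_step_root_Sub_right:
  assumes "eq_step b u u'" and "root (Sub t u) x'"
  shows "simulates b (Sub t u') x'"
  using assms(2)
proof (cases rule: root_Sub_cases)
  case (weak t0)
  then show ?thesis by (auto intro: simulates_step step_weak)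
next
  case deref
  have "eqv b (subst 0 u t) (subst 0 u' t)" unfolding subst_ssub
    by (rule eqv_ssub_pointwise) (auto simp: substs_def assms(1) r_into_rtranclp)
  moreover have "step (Sub t u') (subst 0 u' t)" using deref(1) by (intro step_root root.d)
  ultimately show ?thesis using deref(2) by (blast intro: simulatesI)
next
  case (contr t1)
  have "step (Sub t u') (Sub (Sub t1 (lift 0 u')) u')"
    unfolding contr(1) using contr(2,3) by (intro step_root root_contr)
  moreover have "eqv b x' (Sub (Sub t1 (lift 0 u')) u')"
    unfolding contr(4) using assms(1) by (intro eqv_sub rtranclp.rtrancl_refl eqv_lift r_into_rtranclp)
  ultimately show ?thesis by (blast intro: simulatesI)
qed

lemma simulates_ctx:
  shows "simulates b y x' \<Longrightarrow> simulates b (Lam y) (Lam x')"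
    and "simulates b y x' \<Longrightarrow> simulates b (App y u) (App x' u)"
    and "simulates b y x' \<Longrightarrow> simulates b (App u y) (App u x')"
    and "simulates b y x' \<Longrightarrow> simulates b (Sub y u) (Sub x' u)"
    and "simulates b y x' \<Longrightarrow> simulates b (Sub u y) (Sub u x')"
  unfolding simulates_def
  by (blast intro: step.intros eqv_lam eqv_app eqv_sub rtranclp.rtrancl_refl)+

lemma eq_step_sim: "eq_step b x y \<Longrightarrow> step x x' \<Longrightarrow> simulates b y x'"
proof (induction arbitrary: x' rule: eq_step.induct)
  case (ax x y) then show ?case by (rule eq_ax_sim)
next
  case (lam t t')
  from lam.prems show ?case by (cases rule: step_Lam_cases) (simp add: simulates_ctx lam.IH)
next
  case (appl t t' u)
  from appl.prems show ?case
    by (cases rule: step_App_cases)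
       (blast intro: eq_step_root_App_left[OF appl.hyps] simulates_ctx appl.IH
         simulates_eq_step step_appr eq_step.appl appl.hyps)+
next
  case (appr u u' t)
  from appr.prems show ?case
    by (cases rule: step_App_cases)
       (blast intro: eq_step_root_App_right[OF appr.hyps] simulates_ctx appr.IH
         simulates_eq_step step_appl eq_step.appr appr.hyps)+
next
  case (subl t t' u)
  from subl.prems show ?case
    by (cases rule: step_Sub_cases)
       (blast intro: eq_step_root_Sub_left[OF subl.hyps] simulates_ctx subl.IH
         simulates_eq_step step_subr eq_step.subl subl.hyps)+
next
  case (subr u u' t)
  from subr.prems show ?case
    by (cases rule: step_Sub_cases)
       (blast intro: eq_step_root_Sub_right[OF subr.hyps] simulates_ctx subr.IH
         simulates_eq_step step_subl eq_step.subr subr.hyps)+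
qed

section \<open>Strong bisimulation\<close>

text \<open>If a symmetric relation R can match every reduction step up to R^**, then R^** is a
  strong bisimulation: the simulation extends along R-chains, and symmetry gives the
  converse direction.\<close>

lemma strong_bisim_rtranclp:
  assumes sym: "\<And>x y. R x y \<Longrightarrow> R y x"
    and sim: "\<And>x y x'. R x y \<Longrightarrow> r x x' \<Longrightarrow> \<exists>y'. r y y' \<and> R\<^sup>*\<^sup>* x' y'"
  shows "strong_bisim r R\<^sup>*\<^sup>*"
proof -
  have fwd: "\<exists>y'. r y y' \<and> R\<^sup>*\<^sup>* x' y'" if "R\<^sup>*\<^sup>* x y" "r x x'" for x y x'
    using that
  proof (induction arbitrary: x' rule: rtranclp_induct)
    case (step z y)
    from step.IH[OF step.prems] obtain z' where "r z z'" "R\<^sup>*\<^sup>* x' z'" by blast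
    with sim[OF step.hyps(2)] show ?case by (blast intro: rtranclp_trans)
  qed blast
  have symm: "R\<^sup>*\<^sup>* y x" if "R\<^sup>*\<^sup>* x y" for x y
    using that symp_rtranclp[of R] sym by (metis sympD sympI)
  show ?thesis
    unfolding strong_bisim_def
  proof (intro allI impI conjI)
    fix s t t' assume "R\<^sup>*\<^sup>* s t" "r t t'"
    with fwd[OF symm] obtain s' where "r s s'" "R\<^sup>*\<^sup>* t' s'" by blast
    then show "\<exists>s'. r s s' \<and> R\<^sup>*\<^sup>* s' t'" using symm by blast
  qed (use fwd in blast)
qed

theorem lemma23:
  shows "strong_bisim step eq_CS \<and> strong_bisim step eq_o"
proof -
  have bisim: "strong_bisim step (eqv b)" for b
    by (rule strong_bisim_rtranclp) (auto intro: eq_step_sym dest: eq_step_sim simp: simulates_def)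
  have "eq_CS = eqv False" using ctx_eq_eqv[of False] by (simp add: eq_CS_def)
  moreover have "eq_o = eqv True" using ctx_eq_eqv[of True] by (simp add: eq_o_def)
  ultimately show ?thesis using bisim by metis
qed

end
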